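(* Let $T$ be a tree on $n\ge 3$ vertices and let $\mathcal{P}$ be a separating path system of $T$. Then: (i) with the exception of at most one leaf, every leaf of $T$ is an endpoint of a path in $\mathcal{P}$; (ii) if a path in $\mathcal{P}$ has two leaves $u,v$ of $T$ as its endpoints, then there is at least one path in $\mathcal{P}$ which has exactly one of $u,v$ as an endpoint; (iii) every vertex of degree two in $T$ is an endpoint of a path in $\mathcal{P}$.
   Context: For a graph $G$, a family $\mathcal{P}$ of subsets of $E(G)$ is a separating path system of $G$ if every member of $\mathcal{P}$ is (the edge set of) a path in $G$, and for every pair of distinct edges $e,e'\in E(G)$ there is some $P\in\mathcal{P}$ containing exactly one of $e,e'$. *)

theory Defs
  imports Main
begin

definition graph :: "'a set \<Rightarrow> 'a set set \<Rightarrow> bool" where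
  "graph V E \<longleftrightarrow> finite V \<and> (\<forall>e\<in>E. \<exists>u v. u \<in> V \<and> v \<in> V \<and> u \<noteq> v \<and> e = {u, v})"

definition walk_edges :: "'a list \<Rightarrow> 'a set set" where
  "walk_edges xs = set (map (\<lambda>(x, y). {x, y}) (zip xs (tl xs)))"

definition is_vpath :: "'a set \<Rightarrow> 'a set set \<Rightarrow> 'a list \<Rightarrow> bool" where
  "is_vpath V E xs \<longleftrightarrow> xs \<noteq> [] \<and> distinct xs \<and> set xs \<subseteq> V \<and> walk_edges xs \<subseteq> E"

definition connected_graph :: "'a set \<Rightarrow> 'a set set \<Rightarrow> bool" where
  "connected_graph V E \<longleftrightarrow>
     (\<forall>u\<in>V. \<forall>v\<in>V. \<exists>xs. is_vpath V E xs \<and> hd xs = u \<and> last xs = v)"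

definition has_cycle :: "'a set \<Rightarrow> 'a set set \<Rightarrow> bool" where
  "has_cycle V E \<longleftrightarrow> (\<exists>xs. length xs \<ge> 3 \<and> is_vpath V E xs \<and> {last xs, hd xs} \<in> E)"

definition tree :: "'a set \<Rightarrow> 'a set set \<Rightarrow> bool" where
  "tree V E \<longleftrightarrow> graph V E \<and> V \<noteq> {} \<and> connected_graph V E \<and> \<not> has_cycle V E"

definition degree :: "'a set set \<Rightarrow> 'a \<Rightarrow> nat" where
  "degree E v = card {e \<in> E. v \<in> e}"

definition leaf :: "'a set set \<Rightarrow> 'a \<Rightarrow> bool" where
  "leaf E v \<longleftrightarrow> degree E v = 1"

definition is_path_edges :: "'a set \<Rightarrow> 'a set set \<Rightarrow> 'a set set \<Rightarrow> bool" where
  "is_path_edges V E P \<longleftrightarrow> (\<exists>xs. is_vpath V E xs \<and> P = walk_edges xs)"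

definition path_endpoint :: "'a set set \<Rightarrow> 'a \<Rightarrow> bool" where
  "path_endpoint P v \<longleftrightarrow> degree P v = 1"

definition separating_path_system :: "'a set \<Rightarrow> 'a set set \<Rightarrow> 'a set set set \<Rightarrow> bool" where
  "separating_path_system V E \<P> \<longleftrightarrow>
     (\<forall>P\<in>\<P>. is_path_edges V E P) \<and>
     (\<forall>e\<in>E. \<forall>e'\<in>E. e \<noteq> e' \<longrightarrow> (\<exists>P\<in>\<P>. (e \<in> P) \<noteq> (e' \<in> P)))"

end

theory Submission
  imports Defs
begin

text \<open>All three parts only look at the edges at a single vertex. If \<open>u\<close> is a leaf with
  edge \<open>e\<close>, then \<open>u\<close> is an endpoint of a path \<open>P\<close> exactly when \<open>e \<in> P\<close>; two distinct leaves
  have distinct edges (otherwise they would form a component of size two), so a path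
  separating their edges has exactly one of them as an endpoint. This gives (i) and (ii).
  If \<open>v\<close> has degree two, a path separating its two edges contains exactly one of them and
  therefore ends at \<open>v\<close>, which is (iii).\<close>

lemma walk_edges_Cons_Cons: "walk_edges (x # y # zs) = insert {x, y} (walk_edges (y # zs))"
  by (simp add: walk_edges_def)

lemma walk_in_closed_set:
  assumes "walk_edges xs \<subseteq> E" and "xs \<noteq> []" and "hd xs \<in> C"
    and closed: "\<And>e. e \<in> E \<Longrightarrow> e \<inter> C \<noteq> {} \<Longrightarrow> e \<subseteq> C"
  shows "set xs \<subseteq> C"
  using assms(1-3)
proof (induction xs rule: induct_list012)
  case (3 x y zs)
  have "{x, y} \<subseteq> C"
    using closed[of "{x, y}"] "3.prems" by (auto simp: walk_edges_Cons_Cons)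
  then show ?case
    using "3.IH"(2) "3.prems"(1) by (auto simp: walk_edges_Cons_Cons)
qed auto

lemma incident_edges_subset:
  assumes "Q \<subseteq> E"
  shows "{e \<in> Q. v \<in> e} = {e \<in> E. v \<in> e} \<inter> Q"
  using assms by blast

lemma leaf_incident_edge:
  assumes "leaf E u"
  obtains e where "{x \<in> E. u \<in> x} = {e}"
  using assms unfolding leaf_def degree_def by (auto simp: card_1_singleton_iff)

lemma path_endpoint_leaf_iff:
  assumes "{x \<in> E. u \<in> x} = {e}" and "Q \<subseteq> E"
  shows "path_endpoint Q u \<longleftrightarrow> e \<in> Q"
proof -
  have "{x \<in> Q. u \<in> x} = (if e \<in> Q then {e} else {})"
    using incident_edges_subset[OF assms(2), of u] assms(1) by auto
  then show ?thesis
    unfolding path_endpoint_def degree_def by simp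
qed

lemma path_endpoint_if_separates_incident_edges:
  assumes "{e \<in> E. v \<in> e} = {x, y}" and "Q \<subseteq> E" and "(x \<in> Q) \<noteq> (y \<in> Q)"
  shows "path_endpoint Q v"
proof -
  have incident: "{e \<in> Q. v \<in> e} = {x, y} \<inter> Q"
    using incident_edges_subset[OF assms(2), of v] assms(1) by simp
  have "{x, y} \<inter> Q = {x} \<or> {x, y} \<inter> Q = {y}"
    using assms(3) by blast
  then show ?thesis
    unfolding path_endpoint_def degree_def incident by auto
qed

lemma leaves_incident_edges_distinct:
  assumes "graph V E" and "connected_graph V E" and "card V \<ge> 3"
    and "u \<in> V" and "v \<in> V" and "u \<noteq> v"
    and eu: "{x \<in> E. u \<in> x} = {e}" and ev: "{x \<in> E. v \<in> x} = {e'}"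
  shows "e \<noteq> e'"
proof
  assume "e = e'"
  with eu ev have "e \<in> E" "u \<in> e" "v \<in> e" by auto
  with \<open>graph V E\<close> \<open>u \<noteq> v\<close> have e_uv: "e = {u, v}"
    unfolding graph_def by fastforce
  have "\<not> V \<subseteq> {u, v}"
  proof
    assume "V \<subseteq> {u, v}"
    then have "card V \<le> card {u, v}"
      by (simp add: card_mono)
    also have "\<dots> \<le> 2"
      by (simp add: card_insert_if)
    finally show False
      using \<open>card V \<ge> 3\<close> by simp
  qed
  then obtain w where w: "w \<in> V" "w \<notin> {u, v}" by auto
  obtain xs where xs: "is_vpath V E xs" "hd xs = u" "last xs = w"
    using \<open>connected_graph V E\<close> \<open>u \<in> V\<close> w(1) unfolding connected_graph_def by blast
  \<comment> \<open>No edge leaves \<open>{u, v}\<close>, so the path from \<open>u\<close> cannot reach \<open>w\<close>.\<close>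
  have "set xs \<subseteq> {u, v}"
  proof (rule walk_in_closed_set)
    fix d assume "d \<in> E" "d \<inter> {u, v} \<noteq> {}"
    then have "d \<in> {x \<in> E. u \<in> x} \<or> d \<in> {x \<in> E. v \<in> x}" by auto
    then show "d \<subseteq> {u, v}"
      using eu ev e_uv \<open>e = e'\<close> by auto
  qed (use xs in \<open>auto simp: is_vpath_def\<close>)
  moreover have "w \<in> set xs"
    using xs by (metis is_vpath_def last_in_set)
  ultimately show False
    using w(2) by blast
qed

lemma separating_path_system_subset:
  assumes "separating_path_system V E \<P>" and "P \<in> \<P>"
  shows "P \<subseteq> E"
proof -
  have "is_path_edges V E P"
    using assms by (simp add: separating_path_system_def)
  then obtain xs where "is_vpath V E xs" and "P = walk_edges xs"
    unfolding is_path_edges_def by blast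
  then show ?thesis
    unfolding is_vpath_def by simp
qed

lemma separating_path_system_separates:
  assumes "separating_path_system V E \<P>" and "e \<in> E" and "e' \<in> E" and "e \<noteq> e'"
  obtains Q where "Q \<in> \<P>" and "(e \<in> Q) \<noteq> (e' \<in> Q)"
proof -
  have "\<forall>e\<in>E. \<forall>e'\<in>E. e \<noteq> e' \<longrightarrow> (\<exists>Q\<in>\<P>. (e \<in> Q) \<noteq> (e' \<in> Q))"
    using assms(1) by (simp add: separating_path_system_def)
  then show ?thesis
    using assms(2-4) that by blast
qed

lemma separating_path_system_separates_leaves:
  assumes "graph V E" and "connected_graph V E" and "card V \<ge> 3"
    and sps: "separating_path_system V E \<P>"
    and "u \<in> V" and "v \<in> V" and "u \<noteq> v" and "leaf E u" and "leaf E v"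
  shows "\<exists>Q\<in>\<P>. path_endpoint Q u \<noteq> path_endpoint Q v"
proof -
  obtain e where eu: "{x \<in> E. u \<in> x} = {e}"
    using \<open>leaf E u\<close> by (rule leaf_incident_edge)
  obtain e' where ev: "{x \<in> E. v \<in> x} = {e'}"
    using \<open>leaf E v\<close> by (rule leaf_incident_edge)
  have "e \<noteq> e'"
    using leaves_incident_edges_distinct assms(1-3,5-7) eu ev .
  moreover have "e \<in> E" "e' \<in> E"
    using eu ev by auto
  ultimately obtain Q where Q: "Q \<in> \<P>" "(e \<in> Q) \<noteq> (e' \<in> Q)"
    using sps by (metis separating_path_system_separates)
  have "Q \<subseteq> E"
    using sps Q(1) by (rule separating_path_system_subset)
  then show ?thesis
    using Q path_endpoint_leaf_iff[OF eu] path_endpoint_leaf_iff[OF ev] by blast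
qed

lemma separating_path_system_degree_two_endpoint:
  assumes sps: "separating_path_system V E \<P>" and "degree E v = 2"
  shows "\<exists>P\<in>\<P>. path_endpoint P v"
proof -
  have "card {e \<in> E. v \<in> e} = 2"
    using \<open>degree E v = 2\<close> unfolding degree_def .
  then obtain x y where xy: "{e \<in> E. v \<in> e} = {x, y}" "x \<noteq> y"
    unfolding card_2_iff by blast
  have "x \<in> E" "y \<in> E"
    using xy(1) by blast+
  then obtain Q where Q: "Q \<in> \<P>" "(x \<in> Q) \<noteq> (y \<in> Q)"
    using sps xy(2) by (metis separating_path_system_separates)
  have "Q \<subseteq> E"
    using sps Q(1) by (rule separating_path_system_subset)
  then have "path_endpoint Q v"
    using path_endpoint_if_separates_incident_edges[OF xy(1) _ Q(2)] by blast
  with Q(1) show ?thesis ..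
qed

theorem lemma6p1:
  fixes V :: "'a set" and E :: "'a set set" and \<P> :: "'a set set set"
  assumes "tree V E" and "card V \<ge> 3" and "separating_path_system V E \<P>"
  shows "(card {v \<in> V. leaf E v \<and> \<not> (\<exists>P\<in>\<P>. path_endpoint P v)} \<le> 1) \<and>
    (\<forall>P\<in>\<P>. \<forall>u\<in>V. \<forall>v\<in>V. u \<noteq> v \<and> leaf E u \<and> leaf E v \<and>
            path_endpoint P u \<and> path_endpoint P v \<longrightarrow>
            (\<exists>Q\<in>\<P>. path_endpoint Q u \<noteq> path_endpoint Q v)) \<and>
    (\<forall>v\<in>V. degree E v = 2 \<longrightarrow> (\<exists>P\<in>\<P>. path_endpoint P v))"
proof -
  have "graph V E" and "connected_graph V E"
    using assms(1) by (simp_all add: tree_def)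
  then have "finite V"
    by (simp add: graph_def)
  note separated = separating_path_system_separates_leaves
    [OF \<open>graph V E\<close> \<open>connected_graph V E\<close> assms(2,3)]
  let ?uncovered = "{v \<in> V. leaf E v \<and> \<not> (\<exists>P\<in>\<P>. path_endpoint P v)}"
  have "u = v" if "u \<in> ?uncovered" and "v \<in> ?uncovered" for u v
  proof (rule ccontr)
    assume "u \<noteq> v"
    with that show False
      using separated[of u v] by simp
  qed
  then have "card ?uncovered \<le> 1"
    using card_le_Suc0_iff_eq[of ?uncovered] \<open>finite V\<close> by simp
  then show ?thesis
    using separated separating_path_system_degree_two_endpoint[OF assms(3)] by simp
qed

end
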